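(* Consider a splitting method (as defined in the context). Suppose there exists $\epsilon>0$ such that, with probability one, the event $$\left|\frac{\sum_{i=1}^{N_{t+1}} w_{t+1}^i}{\sum_{i=1}^{N_t} w_t^i}-1\right|>\epsilon$$ occurs for infinitely many $t$. Then, almost surely, $\sum_{i=1}^{N_t} w_t^i\to 0$ as $t\to\infty$.
   Context: Splitting method: Let $K$ be a Markov transition kernel on a measurable state space $X$ and $\mu_0$ a probability distribution on $X$. A splitting method produces, for $t=0,1,2,\dots$, particles $\xi_t^1,\dots,\xi_t^{N_t}\in X$ with weights $w_t^1,\dots,w_t^{N_t}\ge 0$, together with a filtration $\mathcal F_0\subseteq\hat{\mathcal F}_0\subseteq\mathcal F_1\subseteq\hat{\mathcal F}_1\subseteq\cdots$, as follows. Initially $\xi_0^1,\dots,\xi_0^{N_0}$ are i.i.d. with law $\mu_0$ and $w_0^i=1/N_0$. At each time $t\ge 0$: (Splitting step) for each $i$ a number $C_t^i>0$ is chosen, where $(\xi_t^i,w_t^i,C_t^i)_{1\le i\le N_t}$ is $\mathcal F_t$-measurable; random nonnegative integers $N_t^i$ are drawn with $\mathbb E[N_t^i\mid\mathcal F_t]=C_t^i$; each $\xi_t^i$ is replaced by $N_t^i$ copies, each with weight $w_t^i/C_t^i$; the resulting children are listed as $(\hat\xi_t^j,\hat w_t^j)_{1\le j\le N_{t+1}}$ with $N_{t+1}=\sum_i N_t^i$, and they are $\hat{\mathcal F}_t$-measurable. (Evolution step) conditional on $\hat{\mathcal F}_t$, the particles $\xi_{t+1}^1,\dots,\xi_{t+1}^{N_{t+1}}$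 are independent with $\xi_{t+1}^j\sim K(\hat\xi_t^j,\cdot)$, and $w_{t+1}^j=\hat w_t^j$. *)

theory Defs
  imports "HOL-Probability.Probability" "HOL-Library.Multiset"
begin

text \<open>Indices are 0-based: particle i at time t exists iff i < N t.
  M: underlying probability space (outcomes of type 'a); X: state space;
  K: Markov kernel; mu0: initial law; N0: initial number of particles;
  F t, Fh t: the filtration F_t, hat F_t;  xi t i, w t i, C t i: particles, weights, C_t^i;
  Ns t i: the offspring numbers N_t^i;  hxi t j, hw t j: the children (hat xi, hat w).\<close>

definition splitting_method ::
  "'a measure \<Rightarrow> 'x measure \<Rightarrow> ('x \<Rightarrow> 'x measure) \<Rightarrow> 'x measure \<Rightarrow> nat \<Rightarrow>
   (nat \<Rightarrow> 'a measure) \<Rightarrow> (nat \<Rightarrow> 'a measure) \<Rightarrow> (nat \<Rightarrow> 'a \<Rightarrow> nat) \<Rightarrow>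
   (nat \<Rightarrow> nat \<Rightarrow> 'a \<Rightarrow> 'x) \<Rightarrow> (nat \<Rightarrow> nat \<Rightarrow> 'a \<Rightarrow> real) \<Rightarrow> (nat \<Rightarrow> nat \<Rightarrow> 'a \<Rightarrow> real) \<Rightarrow>
   (nat \<Rightarrow> nat \<Rightarrow> 'a \<Rightarrow> nat) \<Rightarrow> (nat \<Rightarrow> nat \<Rightarrow> 'a \<Rightarrow> 'x) \<Rightarrow> (nat \<Rightarrow> nat \<Rightarrow> 'a \<Rightarrow> real) \<Rightarrow> bool"
where
  "splitting_method M X K mu0 N0 F Fh N xi w C Ns hxi hw \<longleftrightarrow>
     prob_space M \<and>
     K \<in> measurable X (prob_algebra X) \<and>
     prob_space mu0 \<and> sets mu0 = sets X \<and>
     \<comment> \<open>filtration F_0 \<subseteq> hat F_0 \<subseteq> F_1 \<subseteq> ...\<close>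
     (\<forall>t. subalgebra M (F t) \<and> subalgebra M (Fh t) \<and>
          sets (F t) \<subseteq> sets (Fh t) \<and> sets (Fh t) \<subseteq> sets (F (Suc t))) \<and>
     \<comment> \<open>initialisation\<close>
     (\<forall>\<omega>\<in>space M. N 0 \<omega> = N0) \<and>
     prob_space.indep_vars M (\<lambda>_. X) (xi 0) {..<N0} \<and>
     (\<forall>i<N0. distr M X (xi 0 i) = mu0) \<and>
     (\<forall>\<omega>\<in>space M. \<forall>i<N0. w 0 i \<omega> = 1 / real N0) \<and>
     (\<forall>t.
        \<comment> \<open>(xi_t^i, w_t^i, C_t^i)_{i<N_t} is F_t-measurable\<close>
        N t \<in> measurable (F t) (count_space UNIV) \<and>
        (\<forall>i. xi t i \<in> measurable (restrict_space (F t) {\<omega>. i < N t \<omega>}) X) \<and>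
        (\<forall>i. w t i \<in> borel_measurable (restrict_space (F t) {\<omega>. i < N t \<omega>})) \<and>
        (\<forall>i. C t i \<in> borel_measurable (restrict_space (F t) {\<omega>. i < N t \<omega>})) \<and>
        (\<forall>\<omega>\<in>space M. \<forall>i<N t \<omega>. C t i \<omega> > 0 \<and> w t i \<omega> \<ge> 0) \<and>
        \<comment> \<open>splitting: N_t^i random nonnegative integers with E[N_t^i | F_t] = C_t^i\<close>
        (\<forall>i. Ns t i \<in> measurable M (count_space UNIV)) \<and>
        (\<forall>i. \<forall>A\<in>sets (F t).
            (\<integral>\<^sup>+\<omega>. indicator (A \<inter> {\<omega>. i < N t \<omega>}) \<omega> * of_nat (Ns t i \<omega>) \<partial>M)
          = (\<integral>\<^sup>+\<omega>. indicator (A \<inter> {\<omega>. i < N t \<omega>}) \<omega> * ennreal (C t i \<omega>) \<partial>M)) \<and>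
        (\<forall>\<omega>\<in>space M. N (Suc t) \<omega> = (\<Sum>i<N t \<omega>. Ns t i \<omega>)) \<and>
        \<comment> \<open>children: N_t^i copies of xi_t^i with weight w_t^i / C_t^i, listed in some order\<close>
        (\<forall>\<omega>\<in>space M.
            mset (map (\<lambda>j. (hxi t j \<omega>, hw t j \<omega>)) [0..<N (Suc t) \<omega>])
          = (\<Sum>i<N t \<omega>. replicate_mset (Ns t i \<omega>) (xi t i \<omega>, w t i \<omega> / C t i \<omega>))) \<and>
        \<comment> \<open>the children are hat F_t-measurable\<close>
        N (Suc t) \<in> measurable (Fh t) (count_space UNIV) \<and>
        (\<forall>j. hxi t j \<in> measurable (restrict_space (Fh t) {\<omega>. j < N (Suc t) \<omega>}) X) \<and>
        (\<forall>j. hw t j \<in> borel_measurable (restrict_space (Fh t) {\<omega>. j < N (Suc t) \<omega>})) \<and>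
        \<comment> \<open>evolution: given hat F_t, xi_{t+1}^j independent with laws K(hat xi_t^j, .)\<close>
        (\<forall>A\<in>sets (Fh t). \<forall>n. \<forall>B. (\<forall>j<n. B j \<in> sets X) \<longrightarrow>
            emeasure M (A \<inter> {\<omega>\<in>space M. N (Suc t) \<omega> = n \<and> (\<forall>j<n. xi (Suc t) j \<omega> \<in> B j)})
          = (\<integral>\<^sup>+\<omega>. indicator (A \<inter> {\<omega>\<in>space M. N (Suc t) \<omega> = n}) \<omega> *
                 (\<Prod>j<n. emeasure (K (hxi t j \<omega>)) (B j)) \<partial>M)) \<and>
        (\<forall>\<omega>\<in>space M. \<forall>j<N (Suc t) \<omega>. w (Suc t) j \<omega> = hw t j \<omega>))"

definition total_weight :: "(nat \<Rightarrow> 'a \<Rightarrow> nat) \<Rightarrow> (nat \<Rightarrow> nat \<Rightarrow> 'a \<Rightarrow> real) \<Rightarrow> nat \<Rightarrow> 'a \<Rightarrow> real"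
  where "total_weight N w t \<omega> = (\<Sum>i<N t \<omega>. w t i \<omega>)"

end

theory Submission
  imports Defs
begin

text \<open>The total weight \<open>W\<^sub>t\<close> is a nonnegative martingale: particle \<open>i\<close> passes the weight
  \<open>N\<^sub>t\<^sup>i w\<^sub>t\<^sup>i / C\<^sub>t\<^sup>i\<close> to its children, and the conditional mean of this given \<open>F\<^sub>t\<close> is \<open>w\<^sub>t\<^sup>i\<close>.
  A nonnegative supermartingale converges almost surely to a finite limit: Doob's upcrossing
  inequality bounds the number of upcrossings of every rational interval, and Fatou's lemma rules
  out divergence to infinity. On a path whose limit is positive the ratio \<open>W\<^sub>t\<^sub>+\<^sub>1 / W\<^sub>t\<close> tends
  to 1, which is incompatible with it being infinitely often \<open>\<epsilon>\<close>-far from 1. Hence the limit is 0.\<close>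

section \<open>Upcrossings of a real sequence\<close>

text \<open>\<open>upcrossing_armed u a b n\<close> holds iff after its last visit to \<open>[b, \<infinity>)\<close> the sequence has
  visited \<open>(-\<infinity>, a]\<close>; an upcrossing is completed whenever this state is left.\<close>

fun upcrossing_armed :: "(nat \<Rightarrow> real) \<Rightarrow> real \<Rightarrow> real \<Rightarrow> nat \<Rightarrow> bool" where
  "upcrossing_armed u a b 0 \<longleftrightarrow> u 0 \<le> a"
| "upcrossing_armed u a b (Suc n) \<longleftrightarrow>
     (if upcrossing_armed u a b n then u (Suc n) < b else u (Suc n) \<le> a)"

fun upcrossings :: "(nat \<Rightarrow> real) \<Rightarrow> real \<Rightarrow> real \<Rightarrow> nat \<Rightarrow> nat" where
  "upcrossings u a b 0 = 0"
| "upcrossings u a b (Suc n) = upcrossings u a b n +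
     (if upcrossing_armed u a b n \<and> \<not> upcrossing_armed u a b (Suc n) then 1 else 0)"

lemma upcrossings_mono: "m \<le> n \<Longrightarrow> upcrossings u a b m \<le> upcrossings u a b n"
  by (induction n) (auto simp: le_Suc_eq)

lemma upcrossing_inequality_pathwise:
  assumes "a < b"
  shows "(b - a) * upcrossings u a b n + (if upcrossing_armed u a b n then u n - a else 0)
    \<le> (\<Sum>k<n. if upcrossing_armed u a b k then u (Suc k) - u k else 0)"
  using assms by (induction n) (auto simp: algebra_simps)

lemma upcrossing_inequality_nonneg:
  assumes "a < b" and "\<And>n. 0 \<le> u n"
  shows "(b - a) * upcrossings u a b n + (\<Sum>k<n. if upcrossing_armed u a b k then u k else 0)
    \<le> (\<Sum>k<n. if upcrossing_armed u a b k then u (Suc k) else 0) + \<bar>a\<bar>"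
proof -
  have "(\<Sum>k<n. if upcrossing_armed u a b k then u (Suc k) - u k else 0)
      = (\<Sum>k<n. if upcrossing_armed u a b k then u (Suc k) else 0)
      - (\<Sum>k<n. if upcrossing_armed u a b k then u k else 0)"
    by (simp add: sum_subtractf[symmetric] if_distrib cong: if_cong)
  moreover have "- \<bar>a\<bar> \<le> (if upcrossing_armed u a b n then u n - a else 0)"
    using assms(2)[of n] by auto
  ultimately show ?thesis
    using upcrossing_inequality_pathwise[OF assms(1), of u n] by linarith
qed

lemma eventually_below_or_above_if_upcrossings_bounded:
  assumes "\<And>n. real (upcrossings u a b n) \<le> K"
  shows "eventually (\<lambda>n. u n < b) sequentially \<or> eventually (\<lambda>n. a < u n) sequentially"
proof -
  let ?U = "range (upcrossings u a b)"
  have "upcrossings u a b n \<le> nat \<lceil>K\<rceil>" for n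
    by (metis assms ceiling_mono ceiling_of_nat nat_int nat_mono)
  then have "?U \<subseteq> {..nat \<lceil>K\<rceil>}"
    by auto
  then have "finite ?U" by (rule finite_subset) simp
  then obtain m where m: "upcrossings u a b m = Max ?U"
    using Max_in by fastforce
  have eventually_constant: "upcrossings u a b n = upcrossings u a b m" if "m \<le> n" for n
    using upcrossings_mono[OF that, of u a b] Max_ge[OF \<open>finite ?U\<close>, of "upcrossings u a b n"] m
    by simp
  have stays_armed: "upcrossing_armed u a b (Suc n) \<or> \<not> upcrossing_armed u a b n"
    if "m \<le> n" for n
    using eventually_constant[of n] eventually_constant[of "Suc n"] that by (auto split: if_splits)
  show ?thesis
  proof (cases "\<exists>n\<ge>m. upcrossing_armed u a b n")
    case True
    then obtain n where n: "m \<le> n" "upcrossing_armed u a b n" by blast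
    have "upcrossing_armed u a b k" if "n \<le> k" for k
      using that
    proof (induction k rule: dec_induct)
      case (step k)
      then show ?case using stays_armed[of k] n(1) by simp
    qed (fact n(2))
    then have "u (Suc k) < b" if "n \<le> k" for k
      using that by (metis le_SucI upcrossing_armed.simps(2))
    then have "eventually (\<lambda>k. u k < b) sequentially"
      by (intro eventually_sequentiallyI[of "Suc n"]) (metis Suc_le_D Suc_le_mono)
    then show ?thesis ..
  next
    case False
    then have "a < u (Suc k)" if "m \<le> k" for k
      using that by (metis le_SucI not_le upcrossing_armed.simps(2))
    then have "eventually (\<lambda>k. a < u k) sequentially"
      by (intro eventually_sequentiallyI[of "Suc m"]) (metis Suc_le_D Suc_le_mono)
    then show ?thesis ..
  qed
qed

lemma convergent_if_no_oscillation_across_rationals: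
  fixes u :: "nat \<Rightarrow> real"
  assumes nonneg: "\<And>n. 0 \<le> u n"
    and no_oscillation: "\<And>a b. a \<in> \<rat> \<Longrightarrow> b \<in> \<rat> \<Longrightarrow> a < b \<Longrightarrow>
      eventually (\<lambda>n. u n < b) sequentially \<or> eventually (\<lambda>n. a < u n) sequentially"
    and not_at_top: "\<not> filterlim u at_top sequentially"
  shows "convergent u"
proof -
  define S where "S = {q \<in> \<rat>. eventually (\<lambda>n. q < u n) sequentially}"
  have "-1 \<in> S"
    using nonneg by (auto simp: S_def intro!: always_eventually) (smt (verit))
  have "bdd_above S"
  proof (rule ccontr)
    assume "\<not> bdd_above S"
    then have "eventually (\<lambda>n. Z \<le> u n) sequentially" for Z
      unfolding bdd_above_def S_def by (auto elim!: allE[of _ Z] elim: eventually_mono)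
    then show False
      using not_at_top by (simp add: filterlim_at_top)
  qed
  have "u \<longlonglongrightarrow> Sup S"
  proof (rule order_tendstoI)
    fix c assume "c < Sup S"
    then obtain q where "q \<in> S" "c < q"
      using less_cSupD[of S c] \<open>-1 \<in> S\<close> by blast
    then show "eventually (\<lambda>n. c < u n) sequentially"
      unfolding S_def by (auto elim: eventually_mono)
  next
    fix c assume "Sup S < c"
    obtain q1 where q1: "q1 \<in> \<rat>" "Sup S < q1" "q1 < c"
      using Rats_dense_in_real[OF \<open>Sup S < c\<close>] by blast
    obtain q2 where q2: "q2 \<in> \<rat>" "q1 < q2" "q2 < c"
      using Rats_dense_in_real[OF \<open>q1 < c\<close>] by blast
    have "q1 \<notin> S"
      using cSup_upper[OF _ \<open>bdd_above S\<close>, of q1] q1 by auto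
    then have "eventually (\<lambda>n. u n < q2) sequentially"
      using no_oscillation[OF q1(1) q2(1,2)] q1(1) by (auto simp: S_def)
    then show "eventually (\<lambda>n. u n < c) sequentially"
      using q2 by (auto elim: eventually_mono)
  qed
  then show ?thesis by (rule convergentI)
qed

lemma tendsto_zero_if_ratio_frequently_far_from_one:
  fixes u :: "nat \<Rightarrow> real"
  assumes "\<And>n. 0 \<le> u n" and "convergent u" and "0 < \<epsilon>"
    and far: "frequently (\<lambda>t. \<epsilon> < \<bar>u (Suc t) / u t - 1\<bar>) sequentially"
  shows "u \<longlonglongrightarrow> 0"
proof -
  obtain L where L: "u \<longlonglongrightarrow> L"
    using \<open>convergent u\<close> by (auto simp: convergent_def)
  have "L = 0"
  proof (rule ccontr)
    assume "L \<noteq> 0"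
    moreover have "0 \<le> L"
      using L assms(1) by (intro LIMSEQ_le_const) auto
    ultimately have "(\<lambda>t. u (Suc t) / u t) \<longlonglongrightarrow> L / L"
      by (intro tendsto_divide LIMSEQ_Suc L) auto
    then have "(\<lambda>t. u (Suc t) / u t) \<longlonglongrightarrow> 1"
      using \<open>L \<noteq> 0\<close> by simp
    then have "eventually (\<lambda>t. \<not> \<epsilon> < \<bar>u (Suc t) / u t - 1\<bar>) sequentially"
      by (rule eventually_mono[OF tendstoD[OF _ \<open>0 < \<epsilon>\<close>]]) (auto simp: dist_real_def)
    then show False
      using far by (simp add: frequently_def)
  qed
  then show ?thesis using L by simp
qed

text \<open>If \<open>\<integral>\<^sub>A f = \<integral>\<^sub>A g\<close> for all \<open>A \<in> G\<close>, the densities \<open>f\<close> and \<open>g\<close> induce the same measure on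
  \<open>G\<close>, so \<open>\<integral> h f = \<integral> h g\<close> for every \<open>G\<close>-measurable \<open>h \<ge> 0\<close>.\<close>

lemma nn_integral_mult_eq_from_indicators:
  assumes G: "subalgebra M G"
    and [measurable]: "f \<in> borel_measurable M" "g \<in> borel_measurable M"
    and eq: "\<And>A. A \<in> sets G \<Longrightarrow>
      (\<integral>\<^sup>+x. indicator A x * f x \<partial>M) = (\<integral>\<^sup>+x. indicator A x * g x \<partial>M)"
    and h: "h \<in> borel_measurable G"
  shows "(\<integral>\<^sup>+x. h x * f x \<partial>M) = (\<integral>\<^sup>+x. h x * g x \<partial>M)"
proof -
  have [measurable]: "h \<in> borel_measurable M"
    using G h by (rule measurable_from_subalg)
  have sub: "subalgebra (density M k) G" for k
    using G by (simp add: subalgebra_def)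
  have restr: "(\<integral>\<^sup>+x. h x * k x \<partial>M) = integral\<^sup>N (restr_to_subalg (density M k) G) h"
    if [measurable]: "k \<in> borel_measurable M" for k
  proof -
    have "integral\<^sup>N (restr_to_subalg (density M k) G) h = integral\<^sup>N (density M k) h"
    proof (rule nn_integral_subalgebra)
      show "h \<in> borel_measurable (restr_to_subalg (density M k) G)"
        using h by (simp add: measurable_cong_sets[OF sets_restr_to_subalg[OF sub]])
    qed (use sub[of k] in \<open>auto simp: sets_restr_to_subalg space_restr_to_subalg
          emeasure_restr_to_subalg subalgebra_def\<close>)
    then show ?thesis by (simp add: nn_integral_density mult.commute)
  qed
  have "restr_to_subalg (density M f) G = restr_to_subalg (density M g) G"
  proof (rule measure_eqI)
    fix A assume "A \<in> sets (restr_to_subalg (density M f) G)"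
    then have A: "A \<in> sets G" by (simp add: sets_restr_to_subalg sub)
    then have [measurable]: "A \<in> sets M" using G by (auto simp: subalgebra_def)
    show "emeasure (restr_to_subalg (density M f) G) A = emeasure (restr_to_subalg (density M g) G) A"
      using eq[OF A] by (simp add: emeasure_restr_to_subalg[OF sub A] emeasure_density mult.commute)
  qed (simp add: sets_restr_to_subalg sub)
  then show ?thesis by (simp add: restr)
qed

lemma borel_measurable_extend_by_zero:
  fixes f :: "'a \<Rightarrow> real"
  assumes [measurable]: "n \<in> measurable G (count_space UNIV)"
    and "f \<in> borel_measurable (restrict_space G {x. i < n x})"
  shows "(\<lambda>x. if i < n x then f x else 0) \<in> borel_measurable G"
proof -
  have "{x \<in> space G. i < n x} \<in> sets G"
    by measurable
  then have "{x. i < n x} \<inter> space G \<in> sets G"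
    by (simp add: Int_def conj_commute)
  then have "(\<lambda>x. indicator {x. i < n x} x *\<^sub>R f x) \<in> borel_measurable G"
    using assms(2) by (subst (asm) borel_measurable_restrict_space_iff)
  moreover have "(\<lambda>x. indicator {x. i < n x} x *\<^sub>R f x) = (\<lambda>x. if i < n x then f x else 0)"
    by (auto simp: indicator_def)
  ultimately show ?thesis by simp
qed

lemma borel_measurable_sum_lessThan_random:
  fixes f :: "nat \<Rightarrow> 'a \<Rightarrow> real"
  assumes "n \<in> measurable G (count_space UNIV)"
    and "\<And>i. f i \<in> borel_measurable (restrict_space G {x. i < n x})"
  shows "(\<lambda>x. \<Sum>i<n x. f i x) \<in> borel_measurable G"
proof -
  have "(\<lambda>x. if i < n x then f i x else 0) \<in> borel_measurable G" for i
    using assms by (rule borel_measurable_extend_by_zero)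
  then have "(\<lambda>x. \<Sum>i<m. if i < n x then f i x else 0) \<in> borel_measurable G" for m
    by (rule borel_measurable_sum)
  then have "(\<lambda>x. (\<lambda>m x. \<Sum>i<m. if i < n x then f i x else 0) (n x) x) \<in> borel_measurable G"
    by (rule measurable_compose_countable'[OF _ assms(1)]) simp_all
  then show ?thesis by simp
qed

lemma suminf_ennreal_if_less:
  assumes "\<And>i. i < n \<Longrightarrow> 0 \<le> f i"
  shows "(\<Sum>i. ennreal (if i < n then f i else 0)) = ennreal (\<Sum>i<n. f i)"
proof -
  have "(\<Sum>i. ennreal (if i < n then f i else 0)) = (\<Sum>i<n. ennreal (f i))"
    by (subst suminf_finite[of "{..<n}"]) auto
  also have "\<dots> = ennreal (\<Sum>i<n. f i)"
    using assms by (intro sum_ennreal) simp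
  finally show ?thesis .
qed

lemma sum_weights_eq_if_mset_eq:
  fixes m :: nat
  assumes "mset (map (\<lambda>j. (y j, v j)) [0..<n]) = (\<Sum>i<m. replicate_mset (k i) (x i, u i :: real))"
  shows "(\<Sum>j<n. v j) = (\<Sum>i<m. real (k i) * u i)"
proof -
  have "(\<Sum>j<n. v j) = sum_mset (image_mset snd (mset (map (\<lambda>j. (y j, v j)) [0..<n])))"
    by (induction n) auto
  also have "\<dots> = sum_mset (image_mset snd (\<Sum>i<m. replicate_mset (k i) (x i, u i)))"
    by (simp only: assms)
  also have "\<dots> = (\<Sum>i<m. real (k i) * u i)"
    by (induction m) auto
  finally show ?thesis .
qed

section \<open>Nonnegative supermartingales converge\<close>

text \<open>Conditional expectations are avoided: as in \<open>splitting_method\<close>, the supermartingale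
  property is expressed through integrals over the sets of \<open>F t\<close>.\<close>

locale nonneg_supermartingale = prob_space M for M :: "'a measure" +
  fixes F :: "nat \<Rightarrow> 'a measure" and W :: "nat \<Rightarrow> 'a \<Rightarrow> real"
  assumes subalgebra_filtration: "subalgebra M (F t)"
    and filtration_mono: "sets (F t) \<subseteq> sets (F (Suc t))"
    and adapted: "W t \<in> borel_measurable (F t)"
    and nonneg: "x \<in> space M \<Longrightarrow> 0 \<le> W t x"
    and supermartingale: "A \<in> sets (F t) \<Longrightarrow>
      (\<integral>\<^sup>+x. indicator A x * ennreal (W (Suc t) x) \<partial>M) \<le> (\<integral>\<^sup>+x. indicator A x * ennreal (W t x) \<partial>M)"
    and initial_finite: "(\<integral>\<^sup>+x. ennreal (W 0 x) \<partial>M) < \<infinity>"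
begin

lemma space_filtration [simp]: "space (F t) = space M"
  using subalgebra_filtration by (simp add: subalgebra_def)

lemma borel_measurable_W [measurable]: "W t \<in> borel_measurable M"
  using subalgebra_filtration adapted by (rule measurable_from_subalg)

lemma subalgebra_filtration_le: "j \<le> k \<Longrightarrow> subalgebra (F k) (F j)"
proof (induction k rule: dec_induct)
  case (step k)
  then show ?case
    using filtration_mono[of k] by (auto simp: subalgebra_def)
qed (simp add: subalgebra_def)

lemma nn_integral_le_initial: "(\<integral>\<^sup>+x. ennreal (W t x) \<partial>M) \<le> (\<integral>\<^sup>+x. ennreal (W 0 x) \<partial>M)"
proof (induction t)
  case (Suc t)
  have "space M \<in> sets (F t)"
    using sets.top[of "F t"] by simp
  from supermartingale[OF this] Suc show ?case
    by (simp cong: nn_integral_cong_simp)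
qed simp

lemma measurable_upcrossing_armed:
  "Measurable.pred (F t) (\<lambda>x. upcrossing_armed (\<lambda>n. W n x) a b t)"
proof (induction t)
  case 0
  note [measurable] = adapted[of 0]
  show ?case by simp
next
  case (Suc t)
  have [measurable]: "Measurable.pred (F (Suc t)) (\<lambda>x. upcrossing_armed (\<lambda>n. W n x) a b t)"
    using subalgebra_filtration_le[of t "Suc t"] Suc by (auto intro: measurable_from_subalg)
  note [measurable] = adapted[of "Suc t"]
  show ?case by simp
qed

lemma pred_upcrossing_armed [measurable]:
  "Measurable.pred M (\<lambda>x. upcrossing_armed (\<lambda>n. W n x) a b t)"
  using subalgebra_filtration measurable_upcrossing_armed by (rule measurable_from_subalg)

lemma measurable_upcrossings [measurable]:
  "(\<lambda>x. upcrossings (\<lambda>n. W n x) a b t) \<in> measurable M (count_space UNIV)"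
  by (induction t) simp_all

lemma nn_integral_armed_Suc_le:
  "(\<integral>\<^sup>+x. ennreal (if upcrossing_armed (\<lambda>n. W n x) a b t then W (Suc t) x else 0) \<partial>M)
    \<le> (\<integral>\<^sup>+x. ennreal (if upcrossing_armed (\<lambda>n. W n x) a b t then W t x else 0) \<partial>M)"
proof -
  let ?armed = "{x \<in> space M. upcrossing_armed (\<lambda>n. W n x) a b t}"
  have "?armed \<in> sets (F t)"
    using measurable_upcrossing_armed[where t=t] by (metis space_filtration Measurable.predE)
  moreover have "(\<integral>\<^sup>+x. indicator ?armed x * ennreal (W j x) \<partial>M)
      = (\<integral>\<^sup>+x. ennreal (if upcrossing_armed (\<lambda>n. W n x) a b t then W j x else 0) \<partial>M)" for j
    by (intro nn_integral_cong) (auto simp: indicator_def)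
  ultimately show ?thesis
    using supermartingale[of ?armed t] by simp
qed

lemma nn_integral_upcrossings_le:
  assumes "a < b"
  shows "(\<integral>\<^sup>+x. ennreal ((b - a) * real (upcrossings (\<lambda>n. W n x) a b t)) \<partial>M) \<le> ennreal \<bar>a\<bar>"
proof -
  let ?armed = "\<lambda>k x. upcrossing_armed (\<lambda>n. W n x) a b k"
  define I where "I j k = (\<integral>\<^sup>+x. ennreal (if ?armed k x then W j x else 0) \<partial>M)" for j k
  have "I k k \<le> (\<integral>\<^sup>+x. ennreal (W 0 x) \<partial>M)" for k
    unfolding I_def using nn_integral_le_initial[of k]
    by (auto intro!: nn_integral_mono ennreal_leI nonneg elim!: order_trans[rotated])
  then have "I k k < \<infinity>" for k
    using initial_finite by (rule le_less_trans)
  then have finite_sum: "(\<Sum>k<t. I k k) \<noteq> \<infinity>"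
    by (simp add: ennreal_sum_eq_top less_top)
  have "(\<integral>\<^sup>+x. ennreal ((b - a) * real (upcrossings (\<lambda>n. W n x) a b t)) \<partial>M) + (\<Sum>k<t. I k k)
    \<le> (\<Sum>k<t. I (Suc k) k) + ennreal \<bar>a\<bar>"
  proof -
    have "ennreal ((b - a) * real (upcrossings (\<lambda>n. W n x) a b t))
        + (\<Sum>k<t. ennreal (if ?armed k x then W k x else 0))
      \<le> (\<Sum>k<t. ennreal (if ?armed k x then W (Suc k) x else 0)) + ennreal \<bar>a\<bar>"
      if "x \<in> space M" for x
      using upcrossing_inequality_nonneg[OF assms, of "\<lambda>n. W n x" t] nonneg[OF that] assms
      by (simp add: ennreal_plus[symmetric] sum_ennreal sum_nonneg ennreal_leI del: ennreal_plus)
    then have "(\<integral>\<^sup>+x. ennreal ((b - a) * real (upcrossings (\<lambda>n. W n x) a b t))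
        + (\<Sum>k<t. ennreal (if ?armed k x then W k x else 0)) \<partial>M)
      \<le> (\<integral>\<^sup>+x. (\<Sum>k<t. ennreal (if ?armed k x then W (Suc k) x else 0)) + ennreal \<bar>a\<bar> \<partial>M)"
      by (rule nn_integral_mono)
    then show ?thesis
      unfolding I_def by (simp add: nn_integral_add nn_integral_sum emeasure_space_1)
  qed
  also have "\<dots> \<le> (\<Sum>k<t. I k k) + ennreal \<bar>a\<bar>"
    unfolding I_def by (intro add_right_mono sum_mono nn_integral_armed_Suc_le)
  finally show ?thesis
    using finite_sum by (simp add: add.commute ennreal_add_left_cancel_le)
qed

lemma AE_eventually_below_or_above:
  assumes "a < b"
  shows "AE x in M. eventually (\<lambda>n. W n x < b) sequentially \<or> eventually (\<lambda>n. a < W n x) sequentially"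
proof -
  let ?V = "\<lambda>t x. ennreal ((b - a) * real (upcrossings (\<lambda>n. W n x) a b t))"
  have "incseq (\<lambda>t. ?V t x)" for x
    using assms by (auto simp: incseq_def intro!: ennreal_leI mult_left_mono upcrossings_mono)
  then have "(\<integral>\<^sup>+x. (SUP t. ?V t x) \<partial>M) = (SUP t. \<integral>\<^sup>+x. ?V t x \<partial>M)"
    by (intro nn_integral_monotone_convergence_SUP) (auto simp: incseq_def le_fun_def)
  also have "\<dots> \<le> ennreal \<bar>a\<bar>"
    using nn_integral_upcrossings_le[OF assms] by (intro SUP_least)
  finally have "AE x in M. (SUP t. ?V t x) \<noteq> \<infinity>"
    by (intro nn_integral_noteq_infinite) (auto simp: top_unique)
  then show ?thesis
  proof (rule AE_mp, intro AE_I2 impI)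
    fix x assume "(SUP t. ?V t x) \<noteq> \<infinity>"
    then obtain r where r: "(SUP t. ?V t x) = ennreal r" "0 \<le> r"
      by (cases "SUP t. ?V t x") auto
    have "(b - a) * upcrossings (\<lambda>n. W n x) a b t \<le> r" for t
      using SUP_upper[of t UNIV "\<lambda>t. ?V t x"] r assms by (simp add: ennreal_le_iff)
    then have "real (upcrossings (\<lambda>n. W n x) a b t) \<le> r / (b - a)" for t
      using assms by (simp add: field_simps)
    then show "eventually (\<lambda>n. W n x < b) sequentially \<or> eventually (\<lambda>n. a < W n x) sequentially"
      by (rule eventually_below_or_above_if_upcrossings_bounded)
  qed
qed

lemma AE_not_tendsto_at_top: "AE x in M. \<not> filterlim (\<lambda>n. W n x) at_top sequentially"
proof -
  have "(\<integral>\<^sup>+x. liminf (\<lambda>n. ennreal (W n x)) \<partial>M) \<le> liminf (\<lambda>n. \<integral>\<^sup>+x. ennreal (W n x) \<partial>M)"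
    by (intro nn_integral_liminf) simp
  also have "\<dots> \<le> limsup (\<lambda>n. \<integral>\<^sup>+x. ennreal (W n x) \<partial>M)"
    by (rule Liminf_le_Limsup) simp
  also have "\<dots> \<le> (\<integral>\<^sup>+x. ennreal (W 0 x) \<partial>M)"
    by (intro Limsup_bounded always_eventually allI nn_integral_le_initial)
  finally have "AE x in M. liminf (\<lambda>n. ennreal (W n x)) \<noteq> \<infinity>"
    using initial_finite by (intro nn_integral_noteq_infinite) (auto simp: top_unique)
  then show ?thesis
  proof (rule AE_mp, intro AE_I2 impI notI)
    fix x assume "liminf (\<lambda>n. ennreal (W n x)) \<noteq> \<infinity>"
      and "filterlim (\<lambda>n. W n x) at_top sequentially"
    then have "((\<lambda>n. ennreal (W n x)) \<longlongrightarrow> \<infinity>) sequentially"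
      by (simp add: ennreal_tendsto_top_eq_at_top)
    then show False
      using \<open>liminf _ \<noteq> \<infinity>\<close> lim_imp_Liminf by force
  qed
qed

theorem AE_convergent: "AE x in M. convergent (\<lambda>n. W n x)"
proof -
  have "AE x in M. \<forall>a\<in>\<rat>. \<forall>b\<in>\<rat>. a < b \<longrightarrow>
      eventually (\<lambda>n. W n x < b) sequentially \<or> eventually (\<lambda>n. a < W n x) sequentially"
    unfolding Rats_def using AE_eventually_below_or_above by (simp add: AE_all_countable)
  with AE_not_tendsto_at_top AE_space show ?thesis
    by eventually_elim (auto intro: convergent_if_no_oscillation_across_rationals nonneg)
qed

end

section \<open>The total weight of a splitting method is a martingale\<close>

context
  fixes M X K mu0 N0 F Fh N xi w C Ns hxi hw
  assumes splitting: "splitting_method M X K mu0 N0 F Fh N xi w C Ns hxi hw"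
begin

lemma splitting_prob_space: "prob_space M"
  using splitting by (simp add: splitting_method_def)

lemma splitting_filtration: "subalgebra M (F t)" "sets (F t) \<subseteq> sets (F (Suc t))"
proof -
  have "subalgebra M (F t)" "sets (F t) \<subseteq> sets (Fh t)" "sets (Fh t) \<subseteq> sets (F (Suc t))"
    using splitting by (simp_all add: splitting_method_def)
  then show "subalgebra M (F t)" "sets (F t) \<subseteq> sets (F (Suc t))"
    by auto
qed

lemma splitting_measurable:
  "N t \<in> measurable (F t) (count_space UNIV)"
  "w t i \<in> borel_measurable (restrict_space (F t) {\<omega>. i < N t \<omega>})"
  "C t i \<in> borel_measurable (restrict_space (F t) {\<omega>. i < N t \<omega>})"
  "Ns t i \<in> measurable M (count_space UNIV)"
  using splitting by (simp_all add: splitting_method_def)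

lemma splitting_positivity:
  assumes "\<omega> \<in> space M" "i < N t \<omega>"
  shows "0 < C t i \<omega>" "0 \<le> w t i \<omega>"
  using splitting assms by (simp_all add: splitting_method_def)

lemma splitting_offspring_mean:
  "A \<in> sets (F t) \<Longrightarrow> (\<integral>\<^sup>+\<omega>. indicator (A \<inter> {\<omega>. i < N t \<omega>}) \<omega> * of_nat (Ns t i \<omega>) \<partial>M)
    = (\<integral>\<^sup>+\<omega>. indicator (A \<inter> {\<omega>. i < N t \<omega>}) \<omega> * ennreal (C t i \<omega>) \<partial>M)"
  using splitting by (simp add: splitting_method_def)

lemma total_weight_nonneg: "\<omega> \<in> space M \<Longrightarrow> 0 \<le> total_weight N w t \<omega>"
  unfolding total_weight_def by (auto intro!: sum_nonneg splitting_positivity)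

lemma total_weight_initial_le_1:
  assumes "\<omega> \<in> space M"
  shows "total_weight N w 0 \<omega> \<le> 1"
proof -
  have "N 0 \<omega> = N0" "\<And>i. i < N0 \<Longrightarrow> w 0 i \<omega> = 1 / real N0"
    using splitting assms by (simp_all add: splitting_method_def)
  then show ?thesis
    by (simp add: total_weight_def)
qed

lemma total_weight_measurable: "total_weight N w t \<in> borel_measurable (F t)"
  unfolding total_weight_def[abs_def]
  by (intro borel_measurable_sum_lessThan_random splitting_measurable)

lemma total_weight_Suc:
  assumes "\<omega> \<in> space M"
  shows "total_weight N w (Suc t) \<omega> = (\<Sum>i<N t \<omega>. real (Ns t i \<omega>) * (w t i \<omega> / C t i \<omega>))"
proof -
  have "\<forall>\<omega>\<in>space M. mset (map (\<lambda>j. (hxi t j \<omega>, hw t j \<omega>)) [0..<N (Suc t) \<omega>])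
      = (\<Sum>i<N t \<omega>. replicate_mset (Ns t i \<omega>) (xi t i \<omega>, w t i \<omega> / C t i \<omega>))"
    \<comment> \<open>extracted verbatim: the simplifier would rewrite both sides of this multiset equation\<close>
    using splitting unfolding splitting_method_def by (elim conjE allE[where x=t]) assumption
  then have "mset (map (\<lambda>j. (hxi t j \<omega>, hw t j \<omega>)) [0..<N (Suc t) \<omega>])
      = (\<Sum>i<N t \<omega>. replicate_mset (Ns t i \<omega>) (xi t i \<omega>, w t i \<omega> / C t i \<omega>))"
    using assms by (rule bspec)
  then have "(\<Sum>j<N (Suc t) \<omega>. hw t j \<omega>) = (\<Sum>i<N t \<omega>. real (Ns t i \<omega>) * (w t i \<omega> / C t i \<omega>))"
    by (rule sum_weights_eq_if_mset_eq)
  moreover have "w (Suc t) j \<omega> = hw t j \<omega>" if "j < N (Suc t) \<omega>" for j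
    using splitting assms that by (simp add: splitting_method_def)
  ultimately show ?thesis
    unfolding total_weight_def by simp
qed

lemma borel_measurable_particle_weights:
  "(\<lambda>\<omega>. if i < N t \<omega> then w t i \<omega> else 0) \<in> borel_measurable M"
  "(\<lambda>\<omega>. if i < N t \<omega> then real (Ns t i \<omega>) * (w t i \<omega> / C t i \<omega>) else 0) \<in> borel_measurable M"
proof -
  note sub = splitting_filtration(1)[of t]
  have "(\<lambda>\<omega>. if i < N t \<omega> then w t i \<omega> else 0) \<in> borel_measurable (F t)"
    and "(\<lambda>\<omega>. if i < N t \<omega> then w t i \<omega> / C t i \<omega> else 0) \<in> borel_measurable (F t)"
    by (intro borel_measurable_extend_by_zero borel_measurable_divide splitting_measurable)+
  then have weight_M: "(\<lambda>\<omega>. if i < N t \<omega> then w t i \<omega> else 0) \<in> borel_measurable M"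
    and [measurable]: "(\<lambda>\<omega>. if i < N t \<omega> then w t i \<omega> / C t i \<omega> else 0) \<in> borel_measurable M"
    using sub by (auto intro: measurable_from_subalg)
  show "(\<lambda>\<omega>. if i < N t \<omega> then w t i \<omega> else 0) \<in> borel_measurable M"
    by (fact weight_M)
  note [measurable] = splitting_measurable(4)
  have "(\<lambda>\<omega>. real (Ns t i \<omega>) * (if i < N t \<omega> then w t i \<omega> / C t i \<omega> else 0)) \<in> borel_measurable M"
    by measurable
  then show "(\<lambda>\<omega>. if i < N t \<omega> then real (Ns t i \<omega>) * (w t i \<omega> / C t i \<omega>) else 0)
      \<in> borel_measurable M"
    by (simp add: if_distrib cong: if_cong)
qed

lemma nn_integral_offspring_count:
  assumes "h \<in> borel_measurable (F t)"
  shows "(\<integral>\<^sup>+\<omega>. h \<omega> * (if i < N t \<omega> then of_nat (Ns t i \<omega>) else 0) \<partial>M)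
       = (\<integral>\<^sup>+\<omega>. h \<omega> * ennreal (if i < N t \<omega> then C t i \<omega> else 0) \<partial>M)"
proof -
  note sub = splitting_filtration(1)[of t]
  note [measurable] = splitting_measurable(4)
  have [measurable]: "N t \<in> measurable M (count_space UNIV)"
    using sub splitting_measurable(1) by (rule measurable_from_subalg)
  have "(\<lambda>\<omega>. if i < N t \<omega> then C t i \<omega> else 0) \<in> borel_measurable (F t)"
    by (intro borel_measurable_extend_by_zero splitting_measurable)
  with sub have [measurable]: "(\<lambda>\<omega>. if i < N t \<omega> then C t i \<omega> else 0) \<in> borel_measurable M"
    by (rule measurable_from_subalg)
  have count_M: "(\<lambda>\<omega>. if i < N t \<omega> then of_nat (Ns t i \<omega>) else 0 :: ennreal) \<in> borel_measurable M"
    and C_M: "(\<lambda>\<omega>. ennreal (if i < N t \<omega> then C t i \<omega> else 0)) \<in> borel_measurable M"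
    by measurable
  have "(\<integral>\<^sup>+\<omega>. indicator A \<omega> * (if i < N t \<omega> then of_nat (Ns t i \<omega>) else 0) \<partial>M)
      = (\<integral>\<^sup>+\<omega>. indicator A \<omega> * ennreal (if i < N t \<omega> then C t i \<omega> else 0) \<partial>M)"
    if "A \<in> sets (F t)" for A
  proof -
    have "(\<integral>\<^sup>+\<omega>. indicator A \<omega> * (if i < N t \<omega> then of_nat (Ns t i \<omega>) else 0) \<partial>M)
        = (\<integral>\<^sup>+\<omega>. indicator (A \<inter> {\<omega>. i < N t \<omega>}) \<omega> * of_nat (Ns t i \<omega>) \<partial>M)"
      by (intro nn_integral_cong) (simp add: indicator_def)
    also have "\<dots> = (\<integral>\<^sup>+\<omega>. indicator (A \<inter> {\<omega>. i < N t \<omega>}) \<omega> * ennreal (C t i \<omega>) \<partial>M)"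
      using that by (rule splitting_offspring_mean)
    also have "\<dots> = (\<integral>\<^sup>+\<omega>. indicator A \<omega> * ennreal (if i < N t \<omega> then C t i \<omega> else 0) \<partial>M)"
      by (intro nn_integral_cong) (simp add: indicator_def)
    finally show ?thesis .
  qed
  with sub count_M C_M show ?thesis
    using assms by (rule nn_integral_mult_eq_from_indicators)
qed

text \<open>This is \<open>\<bbbE>[N\<^sub>t\<^sup>i | F\<^sub>t] = C\<^sub>t\<^sup>i\<close> tested against the \<open>F\<^sub>t\<close>-measurable function
  \<open>1\<^sub>A w\<^sub>t\<^sup>i / C\<^sub>t\<^sup>i\<close>.\<close>

lemma nn_integral_offspring_weight:
  assumes A: "A \<in> sets (F t)"
  shows "(\<integral>\<^sup>+\<omega>. indicator A \<omega> *
            ennreal (if i < N t \<omega> then real (Ns t i \<omega>) * (w t i \<omega> / C t i \<omega>) else 0) \<partial>M)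
       = (\<integral>\<^sup>+\<omega>. indicator A \<omega> * ennreal (if i < N t \<omega> then w t i \<omega> else 0) \<partial>M)"
proof -
  define h where "h \<omega> = indicator A \<omega> * ennreal (if i < N t \<omega> then w t i \<omega> / C t i \<omega> else 0)" for \<omega>
  have "(\<lambda>\<omega>. if i < N t \<omega> then w t i \<omega> / C t i \<omega> else 0) \<in> borel_measurable (F t)"
    by (intro borel_measurable_extend_by_zero borel_measurable_divide splitting_measurable)
  then have "h \<in> borel_measurable (F t)"
    unfolding h_def using A by measurable
  then have "(\<integral>\<^sup>+\<omega>. h \<omega> * (if i < N t \<omega> then of_nat (Ns t i \<omega>) else 0) \<partial>M)
      = (\<integral>\<^sup>+\<omega>. h \<omega> * ennreal (if i < N t \<omega> then C t i \<omega> else 0) \<partial>M)"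
    by (rule nn_integral_offspring_count)
  moreover have "h \<omega> * (if i < N t \<omega> then of_nat (Ns t i \<omega>) else 0) = indicator A \<omega> *
      ennreal (if i < N t \<omega> then real (Ns t i \<omega>) * (w t i \<omega> / C t i \<omega>) else 0) \<and>
    h \<omega> * ennreal (if i < N t \<omega> then C t i \<omega> else 0)
      = indicator A \<omega> * ennreal (if i < N t \<omega> then w t i \<omega> else 0)"
    if "\<omega> \<in> space M" for \<omega>
  proof (cases "i < N t \<omega>")
    case True
    have "0 < C t i \<omega>" "0 \<le> w t i \<omega>"
      using splitting_positivity[OF that True] by auto
    then have "ennreal (w t i \<omega> / C t i \<omega>) * ennreal (real (Ns t i \<omega>))
        = ennreal (real (Ns t i \<omega>) * (w t i \<omega> / C t i \<omega>))"
      and "ennreal (w t i \<omega> / C t i \<omega>) * ennreal (C t i \<omega>) = ennreal (w t i \<omega>)"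
      by (simp_all add: ennreal_mult[symmetric] mult.commute)
    with True show ?thesis
      by (simp add: h_def ennreal_of_nat_eq_real_of_nat mult.assoc)
  qed (simp add: h_def)
  ultimately show ?thesis
    by (simp cong: nn_integral_cong_simp)
qed

lemma nn_integral_total_weight_Suc:
  assumes "A \<in> sets (F t)"
  shows "(\<integral>\<^sup>+\<omega>. indicator A \<omega> * ennreal (total_weight N w (Suc t) \<omega>) \<partial>M)
       = (\<integral>\<^sup>+\<omega>. indicator A \<omega> * ennreal (total_weight N w t \<omega>) \<partial>M)"
proof -
  let ?offspring = "\<lambda>i \<omega>. if i < N t \<omega> then real (Ns t i \<omega>) * (w t i \<omega> / C t i \<omega>) else 0"
  let ?own = "\<lambda>i \<omega>. if i < N t \<omega> then w t i \<omega> else 0"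
  have "ennreal (total_weight N w (Suc t) \<omega>) = (\<Sum>i. ennreal (?offspring i \<omega>))"
    if "\<omega> \<in> space M" for \<omega>
    unfolding total_weight_Suc[OF that] by (rule suminf_ennreal_if_less[symmetric])
      (auto intro!: mult_nonneg_nonneg divide_nonneg_pos splitting_positivity[OF that])
  moreover have "ennreal (total_weight N w t \<omega>) = (\<Sum>i. ennreal (?own i \<omega>))"
    if "\<omega> \<in> space M" for \<omega>
    unfolding total_weight_def
    by (rule suminf_ennreal_if_less[symmetric]) (use splitting_positivity[OF that] in simp)
  ultimately have offspring: "indicator A \<omega> * ennreal (total_weight N w (Suc t) \<omega>)
      = (\<Sum>i. indicator A \<omega> * ennreal (?offspring i \<omega>))"
    and own: "indicator A \<omega> * ennreal (total_weight N w t \<omega>)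
      = (\<Sum>i. indicator A \<omega> * ennreal (?own i \<omega>))"
    if "\<omega> \<in> space M" for \<omega>
    using that by simp_all
  have [measurable]: "A \<in> sets M"
    using assms splitting_filtration(1)[of t] by (auto simp: subalgebra_def)
  note [measurable] = borel_measurable_particle_weights
  have "(\<integral>\<^sup>+\<omega>. indicator A \<omega> * ennreal (total_weight N w (Suc t) \<omega>) \<partial>M)
      = (\<integral>\<^sup>+\<omega>. (\<Sum>i. indicator A \<omega> * ennreal (?offspring i \<omega>)) \<partial>M)"
    by (intro nn_integral_cong offspring)
  also have "\<dots> = (\<Sum>i. \<integral>\<^sup>+\<omega>. indicator A \<omega> * ennreal (?offspring i \<omega>) \<partial>M)"
    by (rule nn_integral_suminf) measurable
  also have "\<dots> = (\<Sum>i. \<integral>\<^sup>+\<omega>. indicator A \<omega> * ennreal (?own i \<omega>) \<partial>M)"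
    by (simp only: nn_integral_offspring_weight[OF assms])
  also have "\<dots> = (\<integral>\<^sup>+\<omega>. (\<Sum>i. indicator A \<omega> * ennreal (?own i \<omega>)) \<partial>M)"
    by (rule nn_integral_suminf[symmetric]) measurable
  also have "\<dots> = (\<integral>\<^sup>+\<omega>. indicator A \<omega> * ennreal (total_weight N w t \<omega>) \<partial>M)"
    by (intro nn_integral_cong own[symmetric])
  finally show ?thesis .
qed

lemma total_weight_nonneg_supermartingale: "nonneg_supermartingale M F (total_weight N w)"
proof (intro nonneg_supermartingale.intro nonneg_supermartingale_axioms.intro)
  show "prob_space M"
    by (rule splitting_prob_space)
  have "(\<integral>\<^sup>+\<omega>. ennreal (total_weight N w 0 \<omega>) \<partial>M) \<le> (\<integral>\<^sup>+\<omega>. 1 \<partial>M)"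
    by (rule nn_integral_mono) (simp add: total_weight_initial_le_1)
  also have "\<dots> = 1"
    using \<open>prob_space M\<close> by (simp add: prob_space.emeasure_space_1)
  finally show "(\<integral>\<^sup>+\<omega>. ennreal (total_weight N w 0 \<omega>) \<partial>M) < \<infinity>"
    by (simp add: le_less_trans)
qed (simp_all add: splitting_filtration total_weight_measurable total_weight_nonneg
      nn_integral_total_weight_Suc)

end

theorem mainTheorem1:
  assumes "splitting_method M X K mu0 N0 F Fh N xi w C Ns hxi hw"
    and "\<exists>\<epsilon>>0. AE \<omega> in M. \<exists>\<^sub>\<infinity>t.
           \<bar>total_weight N w (Suc t) \<omega> / total_weight N w t \<omega> - 1\<bar> > \<epsilon>"
  shows "AE \<omega> in M. (\<lambda>t. total_weight N w t \<omega>) \<longlonglongrightarrow> 0"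
proof -
  interpret nonneg_supermartingale M F "total_weight N w"
    using assms(1) by (rule total_weight_nonneg_supermartingale)
  obtain \<epsilon> where "0 < \<epsilon>" and "AE \<omega> in M. \<exists>\<^sub>\<infinity>t.
      \<bar>total_weight N w (Suc t) \<omega> / total_weight N w t \<omega> - 1\<bar> > \<epsilon>"
    using assms(2) by blast
  from this(2) AE_convergent AE_space show ?thesis
  proof eventually_elim
    case (elim \<omega>)
    then show ?case
      by (intro tendsto_zero_if_ratio_frequently_far_from_one[OF _ _ \<open>0 < \<epsilon>\<close>])
        (auto simp: nonneg cofinite_eq_sequentially)
  qed
qed

end
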